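(* Let $S$ be an $n$-vertex star. For any $s\ge1$, any straight-line drawing of $S$ with spanning ratio at most $s$ has edge-length ratio in $2^{\Omega(n/s^2)}$.
   Context: A star is a tree with one vertex adjacent to all others. A straight-line drawing maps vertices to distinct points and edges to straight-line segments. In a straight-line drawing $\Gamma$, $\pi_\Gamma(u,v)$ is the minimum total Euclidean length of a path between $u$ and $v$, $\|uv\|_\Gamma$ is their Euclidean distance, and the spanning ratio is $\max_{u\neq v}\pi_\Gamma(u,v)/\|uv\|_\Gamma$. The edge-length ratio is the ratio between the lengths of the longest and shortest edges. The $\Omega$ notation hides an absolute constant. *)

theory Defs
  imports "HOL-Analysis.Analysis"
begin

text \<open>A straight-line drawing is a map of the vertices to
points of the Euclidean plane (injective on the vertex set).\<close>

type_synonym point = "real ^ 2"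

text \<open>The n-vertex star: vertices 0..n-1, centre 0 adjacent to every other vertex.\<close>
definition star_edges :: "nat \<Rightarrow> nat set set" where
  "star_edges n = {{0, i} | i. 1 \<le> i \<and> i < n}"

definition is_path :: "'a set set \<Rightarrow> 'a list \<Rightarrow> bool" where
  "is_path E xs \<longleftrightarrow> xs \<noteq> [] \<and> distinct xs \<and>
     (\<forall>i. Suc i < length xs \<longrightarrow> {xs ! i, xs ! Suc i} \<in> E)"

definition path_length :: "('a \<Rightarrow> point) \<Rightarrow> 'a list \<Rightarrow> real" where
  "path_length p xs = (\<Sum>i<length xs - 1. norm (p (xs ! Suc i) - p (xs ! i)))"

definition graph_dist :: "'a set set \<Rightarrow> ('a \<Rightarrow> point) \<Rightarrow> 'a \<Rightarrow> 'a \<Rightarrow> real" where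
  "graph_dist E p u v =
     Inf {path_length p xs | xs. is_path E xs \<and> hd xs = u \<and> last xs = v}"

definition spanning_ratio :: "'a set \<Rightarrow> 'a set set \<Rightarrow> ('a \<Rightarrow> point) \<Rightarrow> real" where
  "spanning_ratio V E p =
     Sup {graph_dist E p u v / norm (p u - p v) | u v. u \<in> V \<and> v \<in> V \<and> u \<noteq> v}"

definition edge_lengths :: "'a set set \<Rightarrow> ('a \<Rightarrow> point) \<Rightarrow> real set" where
  "edge_lengths E p = {norm (p u - p v) | u v. {u, v} \<in> E \<and> u \<noteq> v}"

definition edge_length_ratio :: "'a set set \<Rightarrow> ('a \<Rightarrow> point) \<Rightarrow> real" where
  "edge_length_ratio E p = Max (edge_lengths E p) / Min (edge_lengths E p)"

end

(*
  Let r i = norm (p i - p 0) for the leaves i.  The only path between two leaves passes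
  through the centre, so spanning ratio at most s forces r u + r v \<le> s * norm (p u - p v).
  Hence leaves with r in a common dyadic annulus [a, 2a) are pairwise at distance at least
  2a/s, no two of them share a cell of the grid of side a/s, and at most (4s + 3)^2 \<le> 49 s^2
  of them fit.  There are at most log2 \<rho> + 1 such annuli, \<rho> the edge-length ratio, so
  n - 1 \<le> 49 s^2 (log2 \<rho> + 1), i.e. \<rho> \<ge> 2 powr (n / (196 s^2)) once n / s^2 \<ge> 196.
*)
theory Submission
  imports Defs
begin

lemma abs_diff_less_if_floor_div_eq:
  fixes a b d :: real
  assumes "d > 0" "\<lfloor>a / d\<rfloor> = \<lfloor>b / d\<rfloor>"
  shows "\<bar>a - b\<bar> < d"
proof -
  have "\<bar>a / d - b / d\<bar> < 1" using assms(2) by linarith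
  then show ?thesis using assms(1) by (simp add: diff_divide_distrib[symmetric] abs_divide)
qed

lemma norm_le_abs_components_2: "norm (x :: real ^ 2) \<le> \<bar>x $ 1\<bar> + \<bar>x $ 2\<bar>"
  using norm_le_l1_cart[of x] by (simp add: sum_2)

lemma card_le_grid_packing:
  fixes A :: "(real ^ 2) set"
  assumes "d > 0"
    and bounded: "\<And>y. y \<in> A \<Longrightarrow> norm y < R"
    and separated: "\<And>y z. y \<in> A \<Longrightarrow> z \<in> A \<Longrightarrow> y \<noteq> z \<Longrightarrow> 2 * d \<le> norm (y - z)"
  shows "real (card A) \<le> (2 * R / d + 3)\<^sup>2"
proof (cases "A = {}")
  case False
  define N where "N = \<lceil>R / d\<rceil>"
  define cell where "cell y = (\<lfloor>y $ 1 / d\<rfloor>, \<lfloor>y $ 2 / d\<rfloor>)" for y :: "real ^ 2"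
  have "inj_on cell A"
  proof (rule inj_onI, rule ccontr)
    fix y z assume "y \<in> A" "z \<in> A" "cell y = cell z" "y \<noteq> z"
    then have "\<bar>(y - z) $ 1\<bar> < d" "\<bar>(y - z) $ 2\<bar> < d"
      using abs_diff_less_if_floor_div_eq[OF \<open>d > 0\<close>] by (auto simp: cell_def)
    then have "norm (y - z) < 2 * d" using norm_le_abs_components_2[of "y - z"] by linarith
    with separated \<open>y \<in> A\<close> \<open>z \<in> A\<close> \<open>y \<noteq> z\<close> show False by fastforce
  qed
  moreover have "cell ` A \<subseteq> {-N..N} \<times> {-N..N}"
  proof -
    have "\<lfloor>y $ j / d\<rfloor> \<in> {-N..N}" if "y \<in> A" for y j
    proof -
      have "\<bar>y $ j\<bar> < R" using component_le_norm_cart[of y j] bounded[OF that] by linarith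
      then have "\<bar>y $ j / d\<bar> < R / d" using \<open>d > 0\<close> by (simp add: abs_divide divide_strict_right_mono)
      then show ?thesis unfolding N_def by (simp add: abs_less_iff; linarith)
    qed
    then show ?thesis by (auto simp: cell_def)
  qed
  ultimately have "card A \<le> card ({-N..N} \<times> {-N..N})" by (intro card_inj_on_le) auto
  moreover have "N \<ge> 0"
  proof -
    have "R > 0" using False bounded norm_ge_zero by (metis all_not_in_conv le_less_trans)
    then have "R / d > 0" using \<open>d > 0\<close> by simp
    then show ?thesis unfolding N_def by linarith
  qed
  moreover have "real (card ({-N..N} \<times> {-N..N})) = (real_of_int (2 * N + 1))\<^sup>2"
    using \<open>N \<ge> 0\<close> by (simp add: card_cartesian_product power2_eq_square)
  ultimately have "real (card A) \<le> (real_of_int (2 * N + 1))\<^sup>2"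
    by (metis of_nat_mono)
  also have "\<dots> \<le> (2 * R / d + 3)\<^sup>2"
    using \<open>N \<ge> 0\<close> unfolding N_def by (intro power_mono) linarith+
  finally show ?thesis .
qed simp

lemma card_separated_annulus_le:
  fixes A :: "(real ^ 2) set"
  assumes "s \<ge> 1" "a > 0"
    and annulus: "\<And>y. y \<in> A \<Longrightarrow> a \<le> norm y \<and> norm y < 2 * a"
    and separated: "\<And>y z. y \<in> A \<Longrightarrow> z \<in> A \<Longrightarrow> y \<noteq> z \<Longrightarrow> norm y + norm z \<le> s * norm (y - z)"
  shows "real (card A) \<le> 49 * s\<^sup>2"
proof -
  have "2 * (a / s) \<le> norm (y - z)" if "y \<in> A" "z \<in> A" "y \<noteq> z" for y z
  proof -
    have "2 * a \<le> s * norm (y - z)"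
      using annulus[OF that(1)] annulus[OF that(2)] separated[OF that] by linarith
    then show ?thesis using \<open>s \<ge> 1\<close> by (simp add: field_simps)
  qed
  then have "real (card A) \<le> (2 * (2 * a) / (a / s) + 3)\<^sup>2"
    using \<open>s \<ge> 1\<close> \<open>a > 0\<close> annulus by (intro card_le_grid_packing) auto
  also have "\<dots> = (4 * s + 3)\<^sup>2" using \<open>a > 0\<close> by simp
  also have "\<dots> \<le> (7 * s)\<^sup>2" using \<open>s \<ge> 1\<close> by (intro power_mono) auto
  finally show ?thesis by (simp add: power_mult_distrib)
qed

lemma Max_div_Min_ge_1:
  fixes A :: "real set"
  assumes "finite A" "A \<noteq> {}" "\<And>a. a \<in> A \<Longrightarrow> a > 0"
  shows "Max A / Min A \<ge> 1"
  using assms Min_in[OF assms(1,2)] Max_ge[OF assms(1)] by (simp add: le_divide_eq_1)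

lemma card_le_log_norm_ratio:
  fixes x :: "'a \<Rightarrow> real ^ 2"
  assumes "finite V" "V \<noteq> {}" "s \<ge> 1"
    and nonzero: "\<And>i. i \<in> V \<Longrightarrow> x i \<noteq> 0"
    and separated: "\<And>i j. i \<in> V \<Longrightarrow> j \<in> V \<Longrightarrow> i \<noteq> j \<Longrightarrow>
                      norm (x i) + norm (x j) \<le> s * norm (x i - x j)"
  shows "real (card V) \<le> 49 * s\<^sup>2 * (log 2 (Max (norm ` x ` V) / Min (norm ` x ` V)) + 1)"
proof -
  define m where "m = Min (norm ` x ` V)"
  define M where "M = Max (norm ` x ` V)"
  have norms: "finite (norm ` x ` V)" "norm ` x ` V \<noteq> {}" "\<And>a. a \<in> norm ` x ` V \<Longrightarrow> a > 0"
    using assms by auto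
  have "m > 0" unfolding m_def using Min_in[OF norms(1,2)] norms(3) by blast
  have m_le: "1 \<le> norm (x i) / m" if "i \<in> V" for i
    using \<open>m > 0\<close> that \<open>finite V\<close> by (simp add: m_def)
  have le_M: "norm (x i) / m \<le> M / m" if "i \<in> V" for i
    using \<open>m > 0\<close> that \<open>finite V\<close> by (simp add: M_def divide_right_mono)
  define cls where "cls i = \<lfloor>log 2 (norm (x i) / m)\<rfloor>" for i
  define L where "L = \<lfloor>log 2 (M / m)\<rfloor>"
  have cls_range: "cls i \<in> {0..L}" if "i \<in> V" for i
    using m_le[OF that] le_M[OF that] unfolding cls_def L_def
    by (auto intro!: floor_mono)
  have "inj_on x V"
    using nonzero separated by (fastforce intro: inj_onI)
  have class_card: "real (card {i \<in> V. cls i = k}) \<le> 49 * s\<^sup>2" for k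
  proof -
    let ?C = "{i \<in> V. cls i = k}"
    have "2 powr k * m \<le> norm (x i) \<and> norm (x i) < 2 * (2 powr k * m)" if "i \<in> ?C" for i
    proof -
      have "2 powr k \<le> norm (x i) / m \<and> norm (x i) / m < 2 powr (k + 1)"
        using that m_le[of i] floor_log_eq_powr_iff[of "norm (x i) / m" 2 k] by (simp add: cls_def)
      then show ?thesis using \<open>m > 0\<close> by (simp add: powr_add pos_le_divide_eq pos_divide_less_eq)
    qed
    then have "real (card (x ` ?C)) \<le> 49 * s\<^sup>2"
      using \<open>s \<ge> 1\<close> \<open>m > 0\<close>
      by (intro card_separated_annulus_le[where a = "2 powr k * m"]) (auto intro: separated)
    moreover have "card (x ` ?C) = card ?C"
      using \<open>inj_on x V\<close> by (auto intro: card_image inj_on_subset)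
    ultimately show ?thesis by simp
  qed
  have "V = (\<Union>k\<in>{0..L}. {i \<in> V. cls i = k})" using cls_range by auto
  then have "card V \<le> (\<Sum>k\<in>{0..L}. card {i \<in> V. cls i = k})"
    by (metis card_UN_le finite_atLeastAtMost_int)
  then have "real (card V) \<le> (\<Sum>k\<in>{0..L}. real (card {i \<in> V. cls i = k}))"
    by (metis of_nat_mono of_nat_sum)
  also have "\<dots> \<le> real (card {0..L}) * (49 * s\<^sup>2)"
    by (rule sum_bounded_above) (rule class_card)
  also have "real (card {0..L}) = real_of_int L + 1"
    using cls_range \<open>V \<noteq> {}\<close> by force
  also have "real_of_int L \<le> log 2 (M / m)" unfolding L_def by linarith
  finally show ?thesis using \<open>s \<ge> 1\<close> by (simp add: m_def M_def algebra_simps)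
qed

lemma graph_dist_div_le_spanning_ratio:
  assumes "finite V" "u \<in> V" "v \<in> V" "u \<noteq> v"
  shows "graph_dist E p u v / norm (p u - p v) \<le> spanning_ratio V E p"
proof -
  let ?ratios = "{graph_dist E p u v / norm (p u - p v) | u v. u \<in> V \<and> v \<in> V \<and> u \<noteq> v}"
  have "?ratios \<subseteq> (\<lambda>(u, v). graph_dist E p u v / norm (p u - p v)) ` (V \<times> V)" by auto
  then have "bdd_above ?ratios"
    using \<open>finite V\<close> by (meson bdd_above_finite finite_SigmaI finite_imageI finite_subset)
  then show ?thesis unfolding spanning_ratio_def using assms(2-4) by (auto intro: cSup_upper)
qed

lemma doubleton_in_star_edges_iff:
  "{a, b} \<in> star_edges n \<longleftrightarrow> (a = 0 \<and> b \<in> {1..<n}) \<or> (b = 0 \<and> a \<in> {1..<n})"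
  unfolding star_edges_def by (auto simp: doubleton_eq_iff)

lemma star_path_between_leaves:
  assumes path: "is_path (star_edges n) xs" and "hd xs = u" "last xs = v"
    and "u \<noteq> v" "u \<noteq> 0" "v \<noteq> 0"
  shows "xs = [u, 0, v]"
proof -
  have step: "xs ! i = 0 \<or> xs ! Suc i = 0" if "Suc i < length xs" for i
    using path that unfolding is_path_def by (auto simp: doubleton_in_star_edges_iff)
  have "distinct xs" "xs \<noteq> []" using path unfolding is_path_def by auto
  then have first: "xs ! 0 = u" and last: "xs ! (length xs - 1) = v"
    using assms(2,3) by (simp_all add: hd_conv_nth last_conv_nth)
  have "length xs \<noteq> 1" using first last \<open>u \<noteq> v\<close> by auto
  moreover have "length xs \<noteq> 2" using first last step[of 0] \<open>u \<noteq> 0\<close> \<open>v \<noteq> 0\<close> by auto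
  moreover have "length xs < 4"
  proof (rule ccontr)
    assume "\<not> length xs < 4"
    then have "xs ! 1 = 0" "xs ! 2 = 0 \<or> xs ! 3 = 0"
      using step[of 0] step[of 2] first \<open>u \<noteq> 0\<close> by (auto simp: numeral_3_eq_3)
    moreover have "xs ! 1 \<noteq> xs ! 2" "xs ! 1 \<noteq> xs ! 3"
      using \<open>distinct xs\<close> \<open>\<not> length xs < 4\<close> by (auto simp: nth_eq_iff_index_eq)
    ultimately show False by auto
  qed
  ultimately have "length xs = 3" using \<open>xs \<noteq> []\<close> by (simp add: numeral_eq_Suc less_Suc_eq)
  moreover have "xs ! 1 = 0" using step[of 0] first \<open>u \<noteq> 0\<close> \<open>length xs = 3\<close> by simp
  ultimately show ?thesis using first last
    by (auto simp: numeral_3_eq_3 length_Suc_conv)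
qed

lemma graph_dist_star_leaves:
  assumes "u \<in> {1..<n}" "v \<in> {1..<n}" "u \<noteq> v"
  shows "graph_dist (star_edges n) p u v = norm (p u - p 0) + norm (p v - p 0)"
proof -
  have "is_path (star_edges n) [u, 0, v]"
    using assms unfolding is_path_def by (auto simp: doubleton_in_star_edges_iff less_Suc_eq)
  then have paths: "{xs. is_path (star_edges n) xs \<and> hd xs = u \<and> last xs = v} = {[u, 0, v]}"
    using star_path_between_leaves assms by fastforce
  have "graph_dist (star_edges n) p u v = path_length p [u, 0, v]"
    unfolding graph_dist_def setcompr_eq_image paths by simp
  then show ?thesis by (simp add: path_length_def norm_minus_commute)
qed

lemma edge_lengths_star:
  "edge_lengths (star_edges n) p = (\<lambda>i. norm (p i - p 0)) ` {1..<n}"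
  unfolding edge_lengths_def
  by (fastforce simp: doubleton_in_star_edges_iff norm_minus_commute)

lemma star_leaves_separated:
  assumes "inj_on p {..<n}" "spanning_ratio {..<n} (star_edges n) p \<le> s"
    and "u \<in> {1..<n}" "v \<in> {1..<n}" "u \<noteq> v"
  shows "norm (p u - p 0) + norm (p v - p 0) \<le> s * norm (p u - p v)"
proof -
  have "p u \<noteq> p v" using assms(1,3-5) by (auto dest: inj_onD)
  then have "graph_dist (star_edges n) p u v
             \<le> spanning_ratio {..<n} (star_edges n) p * norm (p u - p v)"
    using graph_dist_div_le_spanning_ratio[of "{..<n}" u v "star_edges n" p] assms(3-5)
    by (simp add: pos_divide_le_eq)
  also have "\<dots> \<le> s * norm (p u - p v)" using assms(2) by (intro mult_right_mono) auto
  finally show ?thesis using graph_dist_star_leaves[OF assms(3-5)] by simp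
qed

theorem star_drawing_leaves_le_log_edge_length_ratio:
  assumes "n \<ge> 2" "s \<ge> 1" "inj_on p {..<n}" "spanning_ratio {..<n} (star_edges n) p \<le> s"
  shows "edge_length_ratio (star_edges n) p \<ge> 1"
    and "real n - 1 \<le> 49 * s\<^sup>2 * (log 2 (edge_length_ratio (star_edges n) p) + 1)"
proof -
  define x where "x i = p i - p 0" for i
  have leaves: "finite {1..<n}" "{1..<n} \<noteq> {}" using \<open>n \<ge> 2\<close> by auto
  have nonzero: "x i \<noteq> 0" if "i \<in> {1..<n}" for i
    using assms(3) that unfolding x_def by (auto dest: inj_onD)
  have ratio: "edge_length_ratio (star_edges n) p =
                Max (norm ` x ` {1..<n}) / Min (norm ` x ` {1..<n})"
    by (simp add: edge_length_ratio_def edge_lengths_star x_def image_image)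
  show "edge_length_ratio (star_edges n) p \<ge> 1"
    unfolding ratio using leaves nonzero by (intro Max_div_Min_ge_1) auto
  have "real (card {1..<n}) \<le> 49 * s\<^sup>2 * (log 2 (edge_length_ratio (star_edges n) p) + 1)"
    unfolding ratio using leaves \<open>s \<ge> 1\<close> nonzero star_leaves_separated[OF assms(3,4)]
    by (intro card_le_log_norm_ratio) (auto simp: x_def)
  then show "real n - 1 \<le> 49 * s\<^sup>2 * (log 2 (edge_length_ratio (star_edges n) p) + 1)"
    using \<open>n \<ge> 2\<close> by (simp add: of_nat_diff)
qed

theorem corollary1:
  shows "\<exists>c::real>0. \<exists>K::real. \<forall>(n::nat) (s::real) (p::nat \<Rightarrow> point).
           n \<ge> 2 \<longrightarrow> s \<ge> 1 \<longrightarrow> inj_on p {..<n} \<longrightarrow> real n / s\<^sup>2 \<ge> K \<longrightarrow>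
           spanning_ratio {..<n} (star_edges n) p \<le> s \<longrightarrow>
           edge_length_ratio (star_edges n) p \<ge> 2 powr (c * real n / s\<^sup>2)"
proof (rule exI[of _ "1 / 196"], intro conjI exI[of _ 196] allI impI)
  fix n :: nat and s :: real and p :: "nat \<Rightarrow> point"
  assume "n \<ge> 2" "s \<ge> 1" "inj_on p {..<n}" "real n / s\<^sup>2 \<ge> 196"
    and "spanning_ratio {..<n} (star_edges n) p \<le> s"
  note bound = star_drawing_leaves_le_log_edge_length_ratio[OF this(1,2,3,5)]
  let ?\<rho> = "edge_length_ratio (star_edges n) p"
  have "s\<^sup>2 > 0" using \<open>s \<ge> 1\<close> by simp
  then have "196 * s\<^sup>2 \<le> real n" using \<open>real n / s\<^sup>2 \<ge> 196\<close> by (simp add: pos_le_divide_eq)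
  then have "real n \<le> 196 * s\<^sup>2 * log 2 ?\<rho>" using bound(2) \<open>n \<ge> 2\<close> by (simp add: algebra_simps)
  then have "1 / 196 * real n / s\<^sup>2 \<le> log 2 ?\<rho>" using \<open>s\<^sup>2 > 0\<close> by (simp add: field_simps)
  then have "2 powr (1 / 196 * real n / s\<^sup>2) \<le> 2 powr log 2 ?\<rho>" by simp
  also have "\<dots> = ?\<rho>" using bound(1) by simp
  finally show "?\<rho> \<ge> 2 powr (1 / 196 * real n / s\<^sup>2)" .
qed simp

end
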